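(* Let $T$ be a p-string of length $n$ and let $1<i\le n$. Let $v_{i-1}$ be the node of $\mathrm{PPH}(T[i-1..])$ with id $i-1$ (the node inserted when passing from $\mathrm{PPH}(T[i..])$ to $\mathrm{PPH}(T[i-1..])$). Then in $\mathrm{PPH}(T[i-1..])$ there is no symbol $a\in\Sigma\cup\{0,\ldots,n-1\}$ for which $\mathrm{rslink}(a,v_{i-1})$ is defined.
   Context: Let $\Sigma$ and $\Pi$ be disjoint alphabets. A p-string is a finite string over $\Sigma\cup\Pi$. For a string $S$, $S[i]$ is its $i$-th character, $S[i..j]$ is the substring from position $i$ to $j$ (empty if $j<i$), and $S[i..]=S[i..|S|]$. The previous encoding $\mathrm{prev}(S)$ of a p-string $S$ of length $n$ is the sequence of length $n$ defined by: - $\mathrm{prev}(S)[i]=S[i]$ if $S[i]\in\Sigma$; - $\mathrm{prev}(S)[i]=0$ if $S[i]\in\Pi$ does not occur in $S[1..i-1]$; - $\mathrm{prev}(S)[i]=i-j$ otherwise, where $j<i$ is the largest position with $S[j]=S[i]$. Sequence hash tree. Let $\langle S_1,\ldots,S_k\rangle$ be a sequence of strings with $S_1=\varepsilon$ and with $S_i$ not a prefix of $S_j$ for any $j<i$. Its sequence hash tree is built as follows. Start from a root representing $\varepsilon$. For $i=2,\ldots,k$, insert as a new node the shortest prefix $p_i$ of $S_i$ that is not yet a node. Attach it as a child of the longest prefix $q_i$ of $S_i$ that is already a node, via an edge labeled $S_i[|q_i|+1]$. $\mathrm{PPH}(T[i..])$ is the sequence hash tree of $\langle\varepsilon,\mathrm{prev}(T[n..]),\ldots,\mathrm{prev}(T[i..])\rangle$.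 Nodes are identified with their root-to-node path labels, and $|v|$ is the length. The node with id $j$ is the node inserted for $\mathrm{prev}(T[j..])$. Reversed suffix links in a heap with nodes over $\Sigma\cup\{0,\ldots,n-1\}$ are defined as follows: - if $a\in\Sigma\cup\{0\}$ and $av$ is a node, then $\mathrm{rslink}(a,v)=av$; - if $a\in\{1,\ldots,n-1\}$, $v[a]=0$, and $0\,v[1..a-1]\,a\,v[a+1..|v|]$ is a node, then $\mathrm{rslink}(a,v)$ is that node; - otherwise $\mathrm{rslink}(a,v)$ is undefined. *)

theory Defs
  imports Main
begin

(* A p-string is a list over 's + 'p : Inl c is a static symbol (Sigma),
   Inr x is a parameter symbol (Pi).  Lists are 0-indexed internally;
   the paper's 1-based position i corresponds to list index i - 1. *)

definition prev_at :: "('s + 'p) list \<Rightarrow> nat \<Rightarrow> 's + nat" where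
  "prev_at S i = (case S ! i of
      Inl c \<Rightarrow> Inl c
    | Inr x \<Rightarrow> (if Inr x \<notin> set (take i S) then Inr 0
                 else Inr (i - (GREATEST j. j < i \<and> S ! j = Inr x))))"

definition prev :: "('s + 'p) list \<Rightarrow> ('s + nat) list" where
  "prev S = map (prev_at S) [0..<length S]"

(* Sequence hash tree: nodes identified with their path labels.
   Inserting string s into node set N adds the shortest prefix of s not yet a node
   (attached below its longest prefix which is a node). *)
definition sht_new :: "'a list set \<Rightarrow> 'a list \<Rightarrow> 'a list" where
  "sht_new N s = take (LEAST k. take k s \<notin> N) s"

definition sht_insert :: "'a list set \<Rightarrow> 'a list \<Rightarrow> 'a list set" where
  "sht_insert N s = insert (sht_new N s) N"

definition sht_nodes :: "'a list list \<Rightarrow> 'a list set" where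
  "sht_nodes xs = foldl sht_insert {[]} xs"

definition suf :: "'c list \<Rightarrow> nat \<Rightarrow> 'c list" where
  "suf T j = drop (j - 1) T"

(* nodes of PPH(T[i..]) = seq. hash tree of <eps, prev(T[n..]), ..., prev(T[i..])> *)
definition pph :: "('s + 'p) list \<Rightarrow> nat \<Rightarrow> ('s + nat) list set" where
  "pph T i = sht_nodes (map (\<lambda>j. prev (suf T j)) (rev [i..<Suc (length T)]))"

(* node with id j: the node inserted for prev(T[j..]) into PPH(T[j+1..]) *)
definition pph_node :: "('s + 'p) list \<Rightarrow> nat \<Rightarrow> ('s + nat) list" where
  "pph_node T j = sht_new (pph T (Suc j)) (prev (suf T j))"

(* reversed suffix link in heap H (set of nodes); None = undefined.
   For a = Inr k with k >= 1, v[k] is the 1-based k-th symbol, i.e. v ! (k - 1). *)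
definition rslink :: "('s + nat) list set \<Rightarrow> 's + nat \<Rightarrow> ('s + nat) list \<Rightarrow> ('s + nat) list option" where
  "rslink H a v = (case a of
      Inl c \<Rightarrow> (if a # v \<in> H then Some (a # v) else None)
    | Inr k \<Rightarrow>
        (if k = 0 then (if a # v \<in> H then Some (a # v) else None)
         else if k \<le> length v \<and> v ! (k - 1) = Inr 0
                 \<and> Inr 0 # take (k - 1) v @ Inr k # drop k v \<in> H
              then Some (Inr 0 # take (k - 1) v @ Inr k # drop k v)
              else None))"

end

theory Submission
  imports Defs
begin

(* The suffix link of a node v (the prev-encoding of its label with the first symbol removed)
   is drop_dangling (tl v).  Suffix links of nodes of PPH(T[k..]) are nodes of PPH(T[k+1..]):
   a new node is one symbol longer than its parent, an older node, and the parent's suffix link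
   gets extended by one symbol when prev(T[k+1..]) is inserted.  Now rslink(a, v) would be a node
   w one symbol longer than v with suffix link v.  As v is the newest node, w is a node of
   PPH(T[i..]), so v is a node of PPH(T[i+1..]), a subset of PPH(T[i..]), although v was
   inserted as a new node. *)

lemma length_prev [simp]: "length (prev S) = length S"
  by (simp add: prev_def)

lemma nth_prev: "m < length S \<Longrightarrow> prev S ! m = prev_at S m"
  by (simp add: prev_def)

lemma prev_at_neq_Suc: "prev_at S m \<noteq> Inr (Suc m)"
  by (auto simp: prev_at_def split: sum.split)

lemma Greatest_nth_Cons_Suc:
  assumes "j0 < m" "xs ! j0 = a"
  shows "(GREATEST j. j < Suc m \<and> (c # xs) ! j = a) = Suc (GREATEST j. j < m \<and> xs ! j = a)"
proof (rule Greatest_equality)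
  let ?G = "GREATEST j. j < m \<and> xs ! j = a"
  have "?G < m \<and> xs ! ?G = a"
    by (rule GreatestI_nat[of _ j0 m]) (use assms in auto)
  then show "Suc ?G < Suc m \<and> (c # xs) ! Suc ?G = a"
    by simp
  fix j
  assume "j < Suc m \<and> (c # xs) ! j = a"
  then show "j \<le> Suc ?G"
    using Greatest_le_nat[of "\<lambda>j. j < m \<and> xs ! j = a" "j - 1" m] by (cases j) auto
qed

lemma Greatest_nth_Cons_0:
  assumes "\<forall>j<m. xs ! j \<noteq> a"
  shows "(GREATEST j. j < Suc m \<and> (a # xs) ! j = a) = 0"
  by (rule Greatest_equality) (use assms in \<open>auto simp: nth_Cons less_Suc_eq_0_disj split: nat.split\<close>)

lemma prev_at_Cons:
  assumes "m < length S"
  shows "prev_at S m =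
    (if prev_at (c # S) (Suc m) = Inr (Suc m) then Inr 0 else prev_at (c # S) (Suc m))"
proof (cases "S ! m")
  case (Inl a)
  then show ?thesis by (simp add: prev_at_def)
next
  case (Inr x)
  have occurs: "Inr x \<in> set (take m S) \<longleftrightarrow> (\<exists>j<m. S ! j = Inr x)"
    using assms by (auto simp: in_set_conv_nth)
  consider (old) j0 where "j0 < m" "S ! j0 = Inr x"
    | (first) "\<forall>j<m. S ! j \<noteq> Inr x" "c = Inr x"
    | (fresh) "\<forall>j<m. S ! j \<noteq> Inr x" "c \<noteq> Inr x"
    by blast
  then show ?thesis
  proof cases
    case old
    then show ?thesis
      using Inr occurs by (auto simp: prev_at_def Greatest_nth_Cons_Suc)
  next
    case first
    then show ?thesis
      using Inr occurs by (auto simp: prev_at_def Greatest_nth_Cons_0)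
  next
    case fresh
    then show ?thesis
      using Inr occurs by (auto simp: prev_at_def)
  qed
qed

(* After deleting the first symbol of S, an entry Inr (m + 1) at index m of tl (prev S) refers
   to the deleted symbol and becomes a first occurrence, Inr 0. *)
definition drop_dangling :: "('s + nat) list \<Rightarrow> ('s + nat) list" where
  "drop_dangling w = map (\<lambda>m. if w ! m = Inr (Suc m) then Inr 0 else w ! m) [0..<length w]"

lemma length_drop_dangling [simp]: "length (drop_dangling w) = length w"
  by (simp add: drop_dangling_def)

lemma nth_drop_dangling:
  "m < length w \<Longrightarrow> drop_dangling w ! m = (if w ! m = Inr (Suc m) then Inr 0 else w ! m)"
  by (simp add: drop_dangling_def)

lemma drop_dangling_take: "drop_dangling (take l w) = take l (drop_dangling w)"
  by (rule nth_equalityI) (auto simp: nth_drop_dangling)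

lemma drop_dangling_prev: "drop_dangling (prev S) = prev S"
  by (rule nth_equalityI) (auto simp: nth_drop_dangling nth_prev prev_at_neq_Suc)

lemma drop_dangling_list_update:
  assumes "j < length w" "w ! j = Inr 0"
  shows "drop_dangling (w[j := Inr (Suc j)]) = drop_dangling w"
  by (rule nth_equalityI) (use assms in \<open>auto simp: nth_drop_dangling nth_list_update\<close>)

lemma prev_tl: "prev (tl S) = drop_dangling (tl (prev S))"
proof (cases S)
  case Nil
  then show ?thesis by (simp add: prev_def drop_dangling_def)
next
  case (Cons c S')
  show ?thesis
    by (rule nth_equalityI) (simp_all add: Cons nth_prev nth_tl nth_drop_dangling prev_at_Cons[of _ S' c])
qed

lemma length_suf: "length (suf T k) = length T + 1 - k" if "1 \<le> k"
  using that by (simp add: suf_def)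

lemma prev_suf_Suc: "prev (suf T (Suc k)) = drop_dangling (tl (prev (suf T k)))" if "1 \<le> k"
proof -
  have "tl (suf T k) = suf T (Suc k)"
    using that by (cases k) (simp_all add: suf_def drop_Suc tl_drop)
  then show ?thesis
    by (simp flip: prev_tl)
qed

definition prefix_closed :: "'a list set \<Rightarrow> bool" where
  "prefix_closed N \<longleftrightarrow> (\<forall>x\<in>N. \<forall>m. take m x \<in> N)"

lemma sht_new_eq_take: "sht_new N s = take (length (sht_new N s)) s"
  by (simp add: sht_new_def min_def)

lemma length_sht_new_le: "length (sht_new N s) \<le> length s"
  by (simp add: sht_new_def)

lemma take_sht_new_mem:
  assumes "l < length (sht_new N s)"
  shows "take l (sht_new N s) \<in> N"
proof -
  let ?L = "LEAST k. take k s \<notin> N"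
  have "l < ?L" and "take l (sht_new N s) = take l s"
    using assms by (simp_all add: sht_new_def)
  then show ?thesis
    by (metis not_less_Least)
qed

lemma sht_new_notin: "s \<notin> N \<Longrightarrow> sht_new N s \<notin> N"
  unfolding sht_new_def by (rule LeastI[of _ "length s"]) simp

lemma sht_insert_take_Suc:
  assumes "prefix_closed N" "take m s \<in> N"
  shows "take (Suc m) s \<in> sht_insert N s"
proof (cases "take (Suc m) s \<in> N")
  case True
  then show ?thesis by (simp add: sht_insert_def)
next
  case False
  let ?L = "LEAST k. take k s \<notin> N"
  have "\<forall>l\<le>m. take l s \<in> N"
    using assms unfolding prefix_closed_def by (metis min_def take_take)
  moreover have "?L \<le> Suc m" and "take ?L s \<notin> N"
    using False by (simp add: Least_le, rule LeastI)
  ultimately have "?L = Suc m"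
    by (metis le_SucE)
  then show ?thesis
    by (simp add: sht_insert_def sht_new_def)
qed

lemma prefix_closed_sht_insert: "prefix_closed N \<Longrightarrow> prefix_closed (sht_insert N s)"
  unfolding prefix_closed_def sht_insert_def
  by (metis insert_iff linorder_not_le take_all take_sht_new_mem)

lemma pph_beyond: "length T < k \<Longrightarrow> pph T k = {[]}"
  by (simp add: pph_def sht_nodes_def)

lemma pph_step:
  assumes "k \<le> length T"
  shows "pph T k = sht_insert (pph T (Suc k)) (prev (suf T k))"
proof -
  have "[k..<Suc (length T)] = k # [Suc k..<Suc (length T)]"
    using assms by (simp add: upt_conv_Cons)
  then show ?thesis
    by (simp add: pph_def sht_nodes_def)
qed

lemma pph_induct [case_names beyond step]:
  assumes "\<And>k. length T < k \<Longrightarrow> P k"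
    and "\<And>k. k \<le> length T \<Longrightarrow> P (Suc k) \<Longrightarrow> P k"
  shows "P k"
proof (cases "length T < k")
  case False
  then have "k \<le> Suc (length T)"
    by simp
  then show ?thesis
    by (induction k rule: inc_induct) (use assms in auto)
qed (use assms in auto)

lemma pph_insert_node: "k \<le> length T \<Longrightarrow> pph T k = insert (pph_node T k) (pph T (Suc k))"
  by (simp add: pph_step sht_insert_def pph_node_def)

lemma pph_Suc_subset: "pph T (Suc k) \<subseteq> pph T k"
  by (cases "k \<le> length T") (auto simp: pph_insert_node pph_beyond)

lemma Nil_mem_pph: "[] \<in> pph T k"
  by (induction k rule: pph_induct[of T]) (auto simp: pph_beyond pph_insert_node)

lemma prefix_closed_pph: "prefix_closed (pph T k)"
proof (induction k rule: pph_induct[of T])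
  case (beyond k)
  then show ?case by (simp add: pph_beyond prefix_closed_def)
next
  case (step k)
  then show ?case by (simp add: pph_step prefix_closed_sht_insert)
qed

lemma length_mem_pph: "x \<in> pph T k \<Longrightarrow> length x \<le> length T + 1 - k"
proof (induction k arbitrary: x rule: pph_induct[of T])
  case (beyond k)
  then show ?case by (simp add: pph_beyond)
next
  case (step k)
  have "length (pph_node T k) \<le> length (suf T k)"
    unfolding pph_node_def by (metis length_prev length_sht_new_le)
  moreover have "x = pph_node T k \<or> length x \<le> length T - k"
    using step by (force simp: pph_insert_node)
  ultimately show ?case
    by (auto simp: suf_def)
qed

lemma drop_dangling_tl_take_prev_suf:
  "1 \<le> k \<Longrightarrow> drop_dangling (tl (take l (prev (suf T k)))) = take (l - 1) (prev (suf T (Suc k)))"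
  by (simp add: prev_suf_Suc tl_take drop_dangling_take)

lemma drop_dangling_tl_mem_pph:
  assumes "1 \<le> k" "y \<in> pph T k" "y \<noteq> []"
  shows "drop_dangling (tl y) \<in> pph T (Suc k)"
  using assms
proof (induction k arbitrary: y rule: pph_induct[of T])
  case (beyond k)
  then show ?case by (simp add: pph_beyond)
next
  case (step k)
  consider "y \<in> pph T (Suc k)" | "y = pph_node T k"
    using step pph_insert_node by blast
  then show ?case
  proof cases
    case 1
    then show ?thesis
      using step pph_Suc_subset by fastforce
  next
    case 2
    let ?P = "prev (suf T k)" and ?Q = "prev (suf T (Suc k))"
    define l where "l = length y - 1"
    have "y = take (length y) ?P"
      unfolding 2 pph_node_def by (rule sht_new_eq_take)
    moreover have len_y: "length y = Suc l"
      using step.prems(3) by (simp add: l_def)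
    ultimately have y: "y = take (Suc l) ?P" and "Suc l \<le> length ?P"
      by (metis, metis length_take min.absorb_iff1 min.commute)
    have link: "drop_dangling (tl y) = take l ?Q"
      using y step.prems(1) by (simp add: drop_dangling_tl_take_prev_suf)
    have "take l y \<in> pph T (Suc k)"
      using take_sht_new_mem[of l "pph T (Suc k)" ?P] 2 len_y unfolding pph_node_def by simp
    then have parent: "take l ?P \<in> pph T (Suc k)"
      using y by simp
    show ?thesis
    proof (cases l)
      case 0
      then show ?thesis using link Nil_mem_pph by simp
    next
      case (Suc l')
      have "take l ?P \<noteq> []"
        using Suc \<open>Suc l \<le> length ?P\<close> by (auto simp flip: length_greater_0_conv)
      then have "Suc k \<le> length T"
        using parent pph_beyond[of T "Suc k"] by (cases "Suc k \<le> length T") auto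
      have "take l' ?Q \<in> pph T (Suc (Suc k))"
        using step.IH[of "take l ?P"] parent \<open>take l ?P \<noteq> []\<close> step.prems(1) Suc
        by (simp add: drop_dangling_tl_take_prev_suf)
      then show ?thesis
        using sht_insert_take_Suc[OF prefix_closed_pph] pph_step[OF \<open>Suc k \<le> length T\<close>] link Suc
        by simp
    qed
  qed
qed

lemma pph_node_notin:
  assumes "1 \<le> k" "k \<le> length T"
  shows "pph_node T k \<notin> pph T (Suc k)"
proof -
  have "prev (suf T k) \<notin> pph T (Suc k)"
    using assms length_mem_pph[of "prev (suf T k)" T "Suc k"] by (force simp: length_suf)
  then show ?thesis
    unfolding pph_node_def by (rule sht_new_notin)
qed

lemma drop_dangling_pph_node: "drop_dangling (pph_node T k) = pph_node T k"
  unfolding pph_node_def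
  by (subst (1 2) sht_new_eq_take) (simp add: drop_dangling_take drop_dangling_prev)

lemma rslink_SomeD:
  assumes "rslink H a v = Some w" "drop_dangling v = v"
  shows "w \<in> H \<and> length w = Suc (length v) \<and> drop_dangling (tl w) = v"
proof (cases a)
  case Inl
  then show ?thesis using assms by (auto simp: rslink_def split: if_splits)
next
  case (Inr k)
  show ?thesis
  proof (cases "k = 0")
    case True
    then show ?thesis using assms Inr by (auto simp: rslink_def split: if_splits)
  next
    case False
    then have k: "k \<le> length v" "v ! (k - 1) = Inr 0"
      and w: "w = Inr 0 # take (k - 1) v @ Inr k # drop k v" "w \<in> H"
      using assms(1) Inr by (auto simp: rslink_def split: if_splits)
    have "tl w = v[k - 1 := Inr (Suc (k - 1))]"
      using w(1) k(1) False upd_conv_take_nth_drop[of "k - 1" v] by simp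
    then have "drop_dangling (tl w) = v"
      using drop_dangling_list_update[of "k - 1" v] k False assms(2) by simp
    then show ?thesis
      using w k False by simp
  qed
qed

theorem lemma6:
  fixes T :: "('s + 'p) list" and i :: nat
  assumes "1 < i" and "i \<le> length T"
  shows "\<forall>a. (case a of Inl _ \<Rightarrow> True | Inr k \<Rightarrow> k < length T) \<longrightarrow>
           rslink (pph T (i - 1)) a (pph_node T (i - 1)) = None"
proof (intro allI impI)
  fix a :: "'s + nat"
  define v where "v = pph_node T (i - 1)"
  have idx: "1 \<le> i - 1" "i - 1 \<le> length T" "Suc (i - 1) = i"
    using assms by simp_all
  show "rslink (pph T (i - 1)) a v = None"
  proof (rule ccontr)
    assume "rslink (pph T (i - 1)) a v \<noteq> None"
    then obtain w where "rslink (pph T (i - 1)) a v = Some w"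
      by blast
    then have w: "w \<in> pph T (i - 1)" "length w = Suc (length v)" "drop_dangling (tl w) = v"
      using rslink_SomeD drop_dangling_pph_node unfolding v_def by blast+
    then have "w \<in> pph T i"
      using pph_insert_node[OF idx(2)] idx(3) unfolding v_def by auto
    then have "v \<in> pph T (Suc i)"
      using drop_dangling_tl_mem_pph[of i w T] w(2,3) assms(1) by fastforce
    then show False
      using pph_Suc_subset pph_node_notin[OF idx(1,2)] idx(3) unfolding v_def by auto
  qed
qed

end
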